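(* (i) If $v=2k$ is even, then $\mathrm{A}_q(v,2)=\sum_{0\le i\le v,\ i\equiv k\ (\mathrm{mod}\ 2)}\begin{bmatrix}v\\i\end{bmatrix}_q$, and the unique set of subspaces of $\mathbb{F}_q^v$ of this size with pairwise subspace distance $\ge2$ is the set of all subspaces $X$ with $\dim X\equiv k\pmod 2$. (ii) If $v=2k+1$ is odd, then $\mathrm{A}_q(v,2)=\sum_{i\text{ even}}\begin{bmatrix}v\\i\end{bmatrix}_q=\sum_{i\text{ odd}}\begin{bmatrix}v\\i\end{bmatrix}_q$, and there are exactly two sets of subspaces of $\mathbb{F}_q^v$ of this size with pairwise distance $\ge2$, namely the set of all even-dimensional subspaces and the set of all odd-dimensional subspaces; these two codes are isomorphic.
   Context: $\mathrm{d}_{\mathrm{S}}(X,Y)=\dim(X+Y)-\dim(X\cap Y)$. $\mathrm{A}_q(v,d)$ is the maximum size of a set of subspaces of $\mathbb{F}_q^v$ with pairwise subspace distance $\geq d$. Gaussian binomial $\begin{bmatrix}n\\k\end{bmatrix}_q$ = number of $k$-dimensional subspaces of $\mathbb{F}_q^n$. Two codes are isomorphic if some $\mathrm{d}_{\mathrm{S}}$-isometry of the subspace lattice of $\mathbb{F}_q^v$ maps one onto the other. *)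

theory Defs
  imports "HOL-Analysis.Analysis"
begin

text \<open>The ambient space F_q^v is modelled as the type 'a ^ 'n, where 'a is a finite
  field with q = CARD('a) elements and v = CARD('n).\<close>

definition subspaces :: "('a::field ^ 'n) set set" where
  "subspaces = {X. vec.subspace X}"

definition subspace_dist :: "('a::field ^ 'n) set \<Rightarrow> ('a ^ 'n) set \<Rightarrow> nat" where
  "subspace_dist X Y = vec.dim (vec.span (X \<union> Y)) - vec.dim (X \<inter> Y)"

definition is_code :: "nat \<Rightarrow> ('a::field ^ 'n) set set \<Rightarrow> bool" where
  "is_code d C \<longleftrightarrow> C \<subseteq> subspaces \<and> (\<forall>X\<in>C. \<forall>Y\<in>C. X \<noteq> Y \<longrightarrow> d \<le> subspace_dist X Y)"

text \<open>A_q(v,d) where q = CARD('a), v = CARD('n) (the type is fixed by the context).\<close>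
definition max_code_size :: "('a::{field,finite} ^ 'n) itself \<Rightarrow> nat \<Rightarrow> nat" where
  "max_code_size _ d = Max {card C | C :: ('a ^ 'n) set set. is_code d C}"

definition gauss_binom :: "nat \<Rightarrow> nat \<Rightarrow> nat \<Rightarrow> nat" where
  "gauss_binom q n k =
     (if k \<le> n then (\<Prod>i<k. q ^ (n - i) - 1) div (\<Prod>i<k. q ^ (i + 1) - 1) else 0)"

definition dS_isometry :: "(('a::field ^ 'n) set \<Rightarrow> ('a ^ 'n) set) \<Rightarrow> bool" where
  "dS_isometry f \<longleftrightarrow> bij_betw f subspaces subspaces \<and>
     (\<forall>X\<in>subspaces. \<forall>Y\<in>subspaces. subspace_dist (f X) (f Y) = subspace_dist X Y)"

definition codes_isomorphic :: "('a::field ^ 'n) set set \<Rightarrow> ('a ^ 'n) set set \<Rightarrow> bool" where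
  "codes_isomorphic C D \<longleftrightarrow> (\<exists>f. dS_isometry f \<and> f ` C = D)"

end

theory Submission
  imports Defs
begin

text \<open>A code of minimum distance 2 never contains subspaces X \<subset> Y with dim Y = dim X + 1.
  Double counting the containments between the i- and (i+1)-dimensional subspaces, a biregular
  bipartite graph, therefore shows that the fractions x i of the i-dimensional subspaces lying in
  the code satisfy x i + x (i + 1) \<le> 1. The size of the code is the sum of the x i weighted by
  the Gaussian binomials, so it is bounded by a linear program. The Gaussian binomials are
  symmetric and more than double from one level to the next in the lower half; this yields an
  explicit dual solution built from their alternating sums, and complementary slackness shows
  that the optimum is attained exactly by the 0/1 vectors alternating between the levels, i.e. by
  the classes of all subspaces of one dimension parity. For even v the middle level has to be
  full, which fixes the parity. For odd v, orthogonal complementation is a d_S-isometry that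
  exchanges the two parity classes.\<close>

section \<open>Counting subspaces over a finite field\<close>

lemma two_le_card_field: "2 \<le> CARD('a::{field,finite})"
proof -
  have "card {0::'a, 1} = 2" by simp
  moreover have "card {0::'a, 1} \<le> CARD('a)" by (rule card_mono) auto
  ultimately show ?thesis by simp
qed

lemma card_field_power_minus_one_pos:
  assumes "0 < n"
  shows "0 < CARD('a::{field,finite}) ^ n - 1"
proof -
  have "1 < CARD('a) ^ n" using two_le_card_field[where 'a='a] assms by (intro one_less_power) auto
  then show ?thesis by simp
qed

lemma card_eq_sum_card_fibres:
  assumes "finite A" "finite T" "f ` A \<subseteq> T"
  shows "card A = (\<Sum>t\<in>T. card {a \<in> A. f a = t})"
  using sum.group[OF assms, of "\<lambda>_. 1::nat"] by simp

lemma card_span_insert: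
  fixes F :: "('a::{field,finite}^'n) set"
  assumes b: "b \<notin> vec.span F"
  shows "card (vec.span (insert b F)) = CARD('a) * card (vec.span F)"
proof -
  let ?f = "\<lambda>(c, u). c *s b + u"
  have span_insert: "vec.span (insert b F) = ?f ` (UNIV \<times> vec.span F)"
  proof (intro set_eqI iffI)
    fix x assume "x \<in> vec.span (insert b F)"
    then obtain c where "x - c *s b \<in> vec.span F" by (auto simp: vec.span_insert)
    then show "x \<in> ?f ` (UNIV \<times> vec.span F)" by (intro image_eqI[of _ _ "(c, x - c *s b)"]) auto
  next
    fix x assume "x \<in> ?f ` (UNIV \<times> vec.span F)"
    then obtain c u where "u \<in> vec.span F" "x = c *s b + u" by auto
    then show "x \<in> vec.span (insert b F)" unfolding vec.span_insert by (auto intro: exI[of _ c])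
  qed
  have "inj_on ?f (UNIV \<times> vec.span F)"
  proof (rule inj_onI, clarsimp)
    fix c u c' u'
    assume u: "u \<in> vec.span F" "u' \<in> vec.span F" and eq: "c *s b + u = c' *s b + u'"
    have "(c - c') *s b = u' - u" using eq by (simp add: algebra_simps vector_sub_rdistrib)
    then have "(c - c') *s b \<in> vec.span F" using vec.span_diff[OF u(2,1)] by simp
    then have "c = c'"
    proof (rule contrapos_pp)
      assume "c \<noteq> c'"
      then have "inverse (c - c') *s ((c - c') *s b) = b" by (simp only: vec.scale_scale) simp
      then show "(c - c') *s b \<notin> vec.span F"
        using b vec.span_scale[of "(c - c') *s b" F "inverse (c - c')"] by auto
    qed
    then show "c = c' \<and> u = u'" using eq by simp
  qed
  then show ?thesis unfolding span_insert by (simp add: card_image card_cartesian_product)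
qed

lemma card_span_independent:
  fixes B :: "('a::{field,finite}^'n) set"
  assumes "vec.independent B"
  shows "card (vec.span B) = CARD('a) ^ card B"
proof -
  have "finite B" by simp
  then show ?thesis using assms
  proof (induction B rule: finite_induct)
    case (insert b F)
    then have "b \<notin> vec.span F" "vec.independent F" by (auto simp: vec.independent_insert)
    then show ?case using insert.IH insert.hyps by (simp add: card_span_insert)
  qed simp
qed

lemma card_subspace:
  fixes W :: "('a::{field,finite}^'n) set"
  assumes "vec.subspace W"
  shows "card W = CARD('a) ^ vec.dim W"
proof -
  obtain B where B: "B \<subseteq> W" "vec.independent B" "W \<subseteq> vec.span B" "card B = vec.dim W"
    using vec.basis_exists by blast
  have "vec.span B = W" using B assms vec.span_subspace by blast
  then show ?thesis using card_span_independent[OF B(2)] B(4) by simp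
qed

definition independent_lists :: "('a::field^'n) set \<Rightarrow> nat \<Rightarrow> ('a^'n) list set" where
  "independent_lists W j =
     {xs. length xs = j \<and> distinct xs \<and> set xs \<subseteq> W \<and> vec.independent (set xs)}"

lemma finite_independent_lists: "finite (independent_lists (W::('a::{field,finite}^'n) set) j)"
  by (rule finite_subset[OF _ finite_lists_length_eq[of UNIV j]]) (auto simp: independent_lists_def)

lemma independent_lists_Suc:
  "independent_lists W (Suc j) =
     (\<lambda>(ys, w). w # ys) ` (SIGMA ys:independent_lists W j. W - vec.span (set ys))"
proof
  show "independent_lists W (Suc j)
      \<subseteq> (\<lambda>(ys, w). w # ys) ` (SIGMA ys:independent_lists W j. W - vec.span (set ys))"
  proof
    fix xs assume xs: "xs \<in> independent_lists W (Suc j)"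
    then obtain w ys where xs_eq: "xs = w # ys" by (cases xs) (auto simp: independent_lists_def)
    with xs have "ys \<in> independent_lists W j \<and> w \<in> W - vec.span (set ys)"
      by (auto simp: independent_lists_def vec.independent_insert)
    then show "xs \<in> (\<lambda>(ys, w). w # ys) ` (SIGMA ys:independent_lists W j. W - vec.span (set ys))"
      using xs_eq by force
  qed
next
  show "(\<lambda>(ys, w). w # ys) ` (SIGMA ys:independent_lists W j. W - vec.span (set ys))
      \<subseteq> independent_lists W (Suc j)"
  proof clarsimp
    fix ys w assume "ys \<in> independent_lists W j" "w \<in> W" "w \<notin> vec.span (set ys)"
    moreover have "w \<notin> set ys" using \<open>w \<notin> vec.span (set ys)\<close> vec.span_base by blast
    ultimately show "w # ys \<in> independent_lists W (Suc j)"
      by (auto simp: independent_lists_def vec.independent_insert)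
  qed
qed

lemma card_independent_lists:
  fixes W :: "('a::{field,finite}^'n) set"
  assumes W: "vec.subspace W"
  shows "card (independent_lists W j) = (\<Prod>t<j. CARD('a) ^ vec.dim W - CARD('a) ^ t)"
proof (induction j)
  case 0
  have "independent_lists W 0 = {[]}" by (auto simp: independent_lists_def vec.independent_empty)
  then show ?case by simp
next
  case (Suc j)
  have complement: "card (W - vec.span (set ys)) = CARD('a) ^ vec.dim W - CARD('a) ^ j"
    if ys: "ys \<in> independent_lists W j" for ys
  proof -
    have "vec.span (set ys) \<subseteq> W"
      using ys W vec.span_minimal[of "set ys" W] by (auto simp: independent_lists_def)
    moreover have "card (vec.span (set ys)) = CARD('a) ^ j"
      using ys card_span_independent[of "set ys"] by (auto simp: independent_lists_def distinct_card)
    ultimately show ?thesis using card_Diff_subset[OF _ \<open>vec.span (set ys) \<subseteq> W\<close>] card_subspace[OF W] by simp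
  qed
  have "inj_on (\<lambda>(ys, w). w # ys) (SIGMA ys:independent_lists W j. W - vec.span (set ys))"
    by (auto simp: inj_on_def)
  then have "card (independent_lists W (Suc j))
      = card (SIGMA ys:independent_lists W j. W - vec.span (set ys))"
    unfolding independent_lists_Suc by (rule card_image)
  also have "\<dots> = (\<Sum>ys\<in>independent_lists W j. card (W - vec.span (set ys)))"
    by (rule card_SigmaI) (auto simp: finite_independent_lists)
  also have "\<dots> = card (independent_lists W j) * (CARD('a) ^ vec.dim W - CARD('a) ^ j)"
    using complement by simp
  finally show ?case using Suc.IH by simp
qed

definition grassmannian :: "('a::field^'n) set \<Rightarrow> nat \<Rightarrow> ('a^'n) set set" where
  "grassmannian W j = {X. vec.subspace X \<and> X \<subseteq> W \<and> vec.dim X = j}"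

text \<open>Group the ordered independent j-tuples of W by their span: each j-subspace of W is the
  span of exactly as many of them as it has ordered bases.\<close>

lemma card_grassmannian_mult_ordered_bases:
  fixes W :: "('a::{field,finite}^'n) set"
  assumes W: "vec.subspace W"
  shows "card (grassmannian W j) * (\<Prod>t<j. CARD('a) ^ j - CARD('a) ^ t)
       = (\<Prod>t<j. CARD('a) ^ vec.dim W - CARD('a) ^ t)"
proof -
  let ?span = "\<lambda>xs. vec.span (set xs)"
  have "?span ` independent_lists W j \<subseteq> grassmannian W j"
  proof
    fix X assume "X \<in> ?span ` independent_lists W j"
    then obtain xs where xs: "xs \<in> independent_lists W j" and X: "X = ?span xs" by blast
    then have "set xs \<subseteq> W" "vec.independent (set xs)" "card (set xs) = j"
      by (auto simp: independent_lists_def distinct_card)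
    then show "X \<in> grassmannian W j"
      using W X vec.span_minimal[of "set xs" W] vec.dim_span_eq_card_independent[of "set xs"]
      by (simp add: grassmannian_def)
  qed
  then have "card (independent_lists W j)
      = (\<Sum>X\<in>grassmannian W j. card {xs \<in> independent_lists W j. ?span xs = X})"
    by (rule card_eq_sum_card_fibres[OF finite_independent_lists finite])
  also have "\<dots> = (\<Sum>X\<in>grassmannian W j. card (independent_lists X j))"
  proof (rule sum.cong[OF refl])
    fix X assume X: "X \<in> grassmannian W j"
    have "?span xs = X" if "xs \<in> independent_lists X j" for xs
    proof -
      have xs: "set xs \<subseteq> X" "vec.independent (set xs)" "card (set xs) = j"
        using that by (auto simp: independent_lists_def distinct_card)
      have "vec.subspace X" "vec.dim X = j" using X by (auto simp: grassmannian_def)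
      then have "X \<subseteq> ?span xs" "?span xs \<subseteq> X"
        using xs vec.card_ge_dim_independent[of "set xs" X] vec.span_minimal[of "set xs" X] by auto
      then show ?thesis by blast
    qed
    then have "{xs \<in> independent_lists W j. ?span xs = X} = independent_lists X j"
      using X by (auto simp: independent_lists_def grassmannian_def intro: vec.span_base)
    then show "card {xs \<in> independent_lists W j. ?span xs = X} = card (independent_lists X j)"
      by simp
  qed
  also have "\<dots> = card (grassmannian W j) * (\<Prod>t<j. CARD('a) ^ j - CARD('a) ^ t)"
    by (simp add: grassmannian_def card_independent_lists)
  finally show ?thesis using card_independent_lists[OF W, of j] by simp
qed

lemma prod_pow_diff_eq:
  fixes q :: nat
  assumes "j \<le> d"
  shows "(\<Prod>t<j. q ^ d - q ^ t) = (\<Prod>t<j. q ^ t) * (\<Prod>t<j. q ^ (d - t) - 1)"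
proof -
  have "(\<Prod>t<j. q ^ d - q ^ t) = (\<Prod>t<j. q ^ t * (q ^ (d - t) - 1))"
  proof (rule prod.cong[OF refl])
    fix t assume "t \<in> {..<j}"
    then have "q ^ t * q ^ (d - t) = q ^ d" using assms by (simp flip: power_add)
    then show "q ^ d - q ^ t = q ^ t * (q ^ (d - t) - 1)" by (simp add: diff_mult_distrib2)
  qed
  then show ?thesis by (simp add: prod.distrib)
qed

lemma card_grassmannian_mult:
  fixes W :: "('a::{field,finite}^'n) set"
  assumes W: "vec.subspace W" and j: "j \<le> vec.dim W"
  shows "card (grassmannian W j) * (\<Prod>t<j. CARD('a) ^ (t + 1) - 1)
       = (\<Prod>t<j. CARD('a) ^ (vec.dim W - t) - 1)"
proof -
  let ?q = "CARD('a)"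
  have "(\<Prod>t<j. ?q ^ (j - t) - 1) = (\<Prod>t<j. ?q ^ (j - Suc t + 1) - 1)"
    by (rule prod.cong) (auto simp: Suc_diff_Suc simp del: power_Suc)
  also have "\<dots> = (\<Prod>t<j. ?q ^ (t + 1) - 1)" by (rule prod.nat_diff_reindex)
  finally have "(\<Prod>t<j. ?q ^ (j - t) - 1) = (\<Prod>t<j. ?q ^ (t + 1) - 1)" .
  then have "(\<Prod>t<j. ?q ^ t) * (card (grassmannian W j) * (\<Prod>t<j. ?q ^ (t + 1) - 1))
      = (\<Prod>t<j. ?q ^ t) * (\<Prod>t<j. ?q ^ (vec.dim W - t) - 1)"
    using card_grassmannian_mult_ordered_bases[OF W, of j]
      prod_pow_diff_eq[of j j ?q] prod_pow_diff_eq[OF j, of ?q]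
    by (simp add: ac_simps)
  moreover have "0 < (\<Prod>t<j. ?q ^ t)" by (simp add: prod_pos)
  ultimately show ?thesis by simp
qed

lemma card_grassmannian:
  fixes W :: "('a::{field,finite}^'n) set"
  assumes "vec.subspace W" and "j \<le> vec.dim W"
  shows "card (grassmannian W j) = gauss_binom CARD('a) (vec.dim W) j"
proof -
  let ?D = "\<Prod>t<j. CARD('a) ^ (t + 1) - 1"
  have "0 < ?D" by (intro prod_pos ballI card_field_power_minus_one_pos) simp
  have "gauss_binom CARD('a) (vec.dim W) j = card (grassmannian W j) * ?D div ?D"
    unfolding gauss_binom_def card_grassmannian_mult[OF assms] using assms(2) by (simp only: if_True)
  also have "\<dots> = card (grassmannian W j)"
    by (rule nonzero_mult_div_cancel_right[OF gr_implies_not0[OF \<open>0 < ?D\<close>]])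
  finally show ?thesis by (rule sym)
qed

lemma card_grassmannian_pos:
  fixes W :: "('a::{field,finite}^'n) set"
  assumes "vec.subspace W" and "j \<le> vec.dim W"
  shows "0 < card (grassmannian W j)"
proof -
  have "0 < (\<Prod>t<j. CARD('a) ^ (vec.dim W - t) - 1)"
    using assms(2) by (intro prod_pos ballI card_field_power_minus_one_pos) simp
  moreover have "card (grassmannian W j) = 0 \<Longrightarrow> (\<Prod>t<j. CARD('a) ^ (vec.dim W - t) - 1) = 0"
    using card_grassmannian_mult[OF assms] by simp
  ultimately show ?thesis using gr_implies_not0 by (intro gr0I) blast
qed

lemma card_grassmannian_Suc_mult:
  fixes W :: "('a::{field,finite}^'n) set"
  assumes W: "vec.subspace W" and j: "Suc j \<le> vec.dim W"
  shows "card (grassmannian W (Suc j)) * (CARD('a) ^ Suc j - 1)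
       = card (grassmannian W j) * (CARD('a) ^ (vec.dim W - j) - 1)"
proof -
  let ?D = "\<Prod>t<j. CARD('a) ^ (t + 1) - 1"
  have "?D * (card (grassmannian W (Suc j)) * (CARD('a) ^ Suc j - 1))
      = ?D * (card (grassmannian W j) * (CARD('a) ^ (vec.dim W - j) - 1))"
    using card_grassmannian_mult[OF W j] card_grassmannian_mult[OF W, of j] j
    by (simp add: ac_simps)
  moreover have "0 < ?D" by (intro prod_pos ballI card_field_power_minus_one_pos) simp
  ultimately show ?thesis using mult_left_cancel[OF gr_implies_not0] by blast
qed

text \<open>The ratio of consecutive Gaussian binomials is (q^(d-j) - 1) / (q^(j+1) - 1).\<close>

lemma two_mul_card_grassmannian_less:
  fixes W :: "('a::{field,finite}^'n) set"
  assumes W: "vec.subspace W" and j: "2 * Suc j \<le> vec.dim W"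
  shows "2 * card (grassmannian W j) < card (grassmannian W (Suc j))"
proof -
  let ?q = "CARD('a)"
  have "2 * ?q ^ Suc j \<le> ?q ^ Suc (Suc j)" using two_le_card_field[where 'a='a] by simp
  also have "\<dots> \<le> ?q ^ (vec.dim W - j)"
    using two_le_card_field[where 'a='a] j by (intro power_increasing) auto
  moreover have "1 \<le> ?q ^ Suc j" using two_le_card_field[where 'a='a] by simp
  ultimately have "2 * (?q ^ Suc j - 1) < ?q ^ (vec.dim W - j) - 1" by linarith
  then have "2 * card (grassmannian W j) * (?q ^ Suc j - 1)
      < card (grassmannian W j) * (?q ^ (vec.dim W - j) - 1)"
    using card_grassmannian_pos[OF W, of j] j by simp
  also have "\<dots> = card (grassmannian W (Suc j)) * (?q ^ Suc j - 1)"
    using card_grassmannian_Suc_mult[OF W, of j] j by simp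
  finally show ?thesis by (rule mult_less_cancel2[THEN iffD1, THEN conjunct2])
qed

lemma card_grassmannian_UNIV:
  "i \<le> CARD('n) \<Longrightarrow>
    card (grassmannian (UNIV::('a::{field,finite}^'n) set) i) = gauss_binom CARD('a) CARD('n) i"
  using card_grassmannian[OF vec.subspace_UNIV, of i] by (simp add: card_cart_basis)

lemma card_grassmannian_UNIV_pos:
  "i \<le> CARD('n) \<Longrightarrow> 0 < card (grassmannian (UNIV::('a::{field,finite}^'n) set) i)"
  using card_grassmannian_pos[OF vec.subspace_UNIV, of i] by (simp add: card_cart_basis)

section \<open>Orthogonal complements\<close>

text \<open>Orthogonal complements are taken with respect to the standard symmetric bilinear form,
  which is nondegenerate over any field (unlike an inner product it may have isotropic vectors,
  so X and perp X need not be complementary).\<close>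

definition dotp :: "'a::field^'n \<Rightarrow> 'a^'n \<Rightarrow> 'a" where
  "dotp x y = (\<Sum>i\<in>UNIV. x $ i * y $ i)"

definition perp :: "('a::field^'n) set \<Rightarrow> ('a^'n) set" where
  "perp S = {y. \<forall>x\<in>S. dotp x y = 0}"

lemma dotp_sym: "dotp x y = dotp y x"
  unfolding dotp_def by (simp add: mult.commute)

lemma subspace_dotp_eq_0: "vec.subspace {x. dotp x y = 0}"
  unfolding vec.subspace_def dotp_def
  by (auto simp: distrib_right sum.distrib mult.assoc simp flip: sum_distrib_left)

lemma subspace_perp: "vec.subspace (perp S)"
proof -
  have "perp S = (\<Inter>x\<in>S. {y. dotp y x = 0})" by (auto simp: perp_def dotp_sym)
  then show ?thesis by (auto intro!: vec.subspace_Inter subspace_dotp_eq_0)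
qed

lemma perp_antimono: "S \<subseteq> T \<Longrightarrow> perp T \<subseteq> perp S"
  unfolding perp_def by blast

lemma perp_Un: "perp (S \<union> T) = perp S \<inter> perp T"
  unfolding perp_def by blast

lemma subset_perp_perp: "S \<subseteq> perp (perp S)"
  unfolding perp_def by (auto simp: dotp_sym)

lemma perp_span: "perp (vec.span S) = perp S"
proof
  show "perp (vec.span S) \<subseteq> perp S" by (rule perp_antimono[OF vec.span_superset])
  show "perp S \<subseteq> perp (vec.span S)"
  proof
    fix y assume "y \<in> perp S"
    then have "vec.span S \<subseteq> {x. dotp x y = 0}"
      by (intro vec.span_minimal subspace_dotp_eq_0) (auto simp: perp_def)
    then show "y \<in> perp (vec.span S)" by (auto simp: perp_def)
  qed
qed

lemma perp_UNIV: "perp (UNIV :: ('a::field^'n) set) = {0}"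
proof -
  have "y = 0" if "y \<in> perp (UNIV :: ('a^'n) set)" for y
  proof -
    have "dotp (axis i 1) y = (\<Sum>j\<in>UNIV. if j = i then y $ j else 0)" for i
      unfolding dotp_def by (rule sum.cong) (auto simp: axis_def)
    then have "dotp (axis i 1) y = y $ i" for i by simp
    then show ?thesis using that by (simp add: perp_def vec_eq_iff)
  qed
  then show ?thesis using subspace_perp vec.subspace_0 by blast
qed

lemma dim_le_dim_inter_dotp_eq_0:
  assumes U: "vec.subspace U"
  shows "vec.dim U \<le> vec.dim (U \<inter> {y. dotp b y = 0}) + 1"
proof (cases "U \<subseteq> {y. dotp b y = 0}")
  case True
  then show ?thesis by (simp add: Int_absorb2)
next
  case False
  then obtain u0 where u0: "u0 \<in> U" "dotp b u0 \<noteq> 0" by blast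
  let ?H = "U \<inter> {y. dotp b y = 0}"
  have "U \<subseteq> vec.span (insert u0 ?H)"
  proof
    fix u assume u: "u \<in> U"
    define c where "c = dotp b u / dotp b u0"
    have "dotp b (u - c *s u0) = dotp b u - c * dotp b u0"
      unfolding dotp_def by (simp add: algebra_simps sum_subtractf sum_distrib_left)
    also have "\<dots> = 0" using u0(2) by (simp add: c_def)
    finally have "dotp b (u - c *s u0) = 0" .
    moreover have "u - c *s u0 \<in> U" using u u0 U by (simp add: vec.subspace_diff vec.subspace_scale)
    ultimately have "u - c *s u0 \<in> vec.span ?H" by (intro vec.span_base) simp
    then show "u \<in> vec.span (insert u0 ?H)" by (auto simp: vec.span_insert)
  qed
  then have "vec.dim U \<le> vec.dim (insert u0 ?H)" by (metis vec.dim_span vec.dim_subset)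
  also have "\<dots> \<le> vec.dim ?H + 1" by (simp add: vec.dim_insert)
  finally show ?thesis .
qed

lemma dim_perp_le_dim_perp_Un:
  assumes "finite T"
  shows "vec.dim (perp S) \<le> vec.dim (perp (S \<union> T)) + card T"
  using assms
proof (induction T rule: finite_induct)
  case empty
  then show ?case by simp
next
  case (insert b T)
  have "perp (S \<union> insert b T) = perp (S \<union> T) \<inter> {y. dotp b y = 0}"
    unfolding perp_def by auto
  then have "vec.dim (perp (S \<union> T)) \<le> vec.dim (perp (S \<union> insert b T)) + 1"
    using dim_le_dim_inter_dotp_eq_0[OF subspace_perp] by simp
  then show ?case using insert by simp
qed

lemma dim_perp:
  fixes X :: "('a::{field,finite}^'n) set"
  assumes X: "vec.subspace X"
  shows "vec.dim (perp X) = CARD('n) - vec.dim X"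
proof -
  obtain B where B: "B \<subseteq> X" "vec.independent B" "X \<subseteq> vec.span B" "card B = vec.dim X"
    using vec.basis_exists by blast
  have perp_B: "perp X = perp B" using perp_span[of B] B X vec.span_subspace by metis
  obtain B' where B': "B \<subseteq> B'" "vec.independent B'" "vec.span B' = UNIV"
    using vec.maximal_independent_subset_extend[OF subset_UNIV B(2)] by (metis top.extremum_unique)
  have card_B': "card B' = CARD('n)"
    using vec.dim_span_eq_card_independent[OF B'(2)] B'(3) by (simp add: card_cart_basis)
  have lower: "CARD('n) \<le> vec.dim (perp B) + card B"
    using dim_perp_le_dim_perp_Un[of B "{}"] by (simp add: card_cart_basis perp_def[of "{}"])
  have "perp (B \<union> (B' - B)) = {0}"
    using B'(1,3) perp_span[of B'] perp_UNIV by (metis Un_Diff_cancel sup.absorb2)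
  then have upper: "vec.dim (perp B) \<le> card B' - card B"
    using dim_perp_le_dim_perp_Un[of "B' - B" B] B'(1) by (simp add: card_Diff_subset)
  show ?thesis using lower upper perp_B B(4) card_B' by simp
qed

lemma perp_perp:
  fixes X :: "('a::{field,finite}^'n) set"
  assumes X: "vec.subspace X"
  shows "perp (perp X) = X"
proof -
  have "vec.dim (perp (perp X)) = vec.dim X"
    using dim_perp[OF X] dim_perp[OF subspace_perp[of X]] dim_subset_UNIV_cart_gen[of X] by simp
  then show ?thesis
    using vec.subspace_dim_equal[OF X subspace_perp subset_perp_perp] by simp
qed

lemma perp_inter:
  fixes X Y :: "('a::{field,finite}^'n) set"
  assumes "vec.subspace X" "vec.subspace Y"
  shows "perp (X \<inter> Y) = vec.span (perp X \<union> perp Y)"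
proof -
  have "perp (vec.span (perp X \<union> perp Y)) = X \<inter> Y"
    using assms by (simp add: perp_span perp_Un perp_perp)
  then show ?thesis using perp_perp[of "vec.span (perp X \<union> perp Y)"] by simp
qed

lemma subspace_dist_perp:
  fixes X Y :: "('a::{field,finite}^'n) set"
  assumes X: "vec.subspace X" and Y: "vec.subspace Y"
  shows "subspace_dist (perp X) (perp Y) = subspace_dist X Y"
proof -
  have "vec.dim (vec.span (perp X \<union> perp Y)) = CARD('n) - vec.dim (X \<inter> Y)"
    using perp_inter[OF X Y] dim_perp[OF vec.subspace_inter[OF X Y]] by simp
  moreover have "vec.dim (perp X \<inter> perp Y) = CARD('n) - vec.dim (vec.span (X \<union> Y))"
    using dim_perp[of "vec.span (X \<union> Y)"] by (simp add: perp_span perp_Un)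
  moreover have "vec.dim (X \<inter> Y) \<le> vec.dim (vec.span (X \<union> Y))"
    by (rule vec.dim_subset) (auto intro: vec.span_base)
  ultimately show ?thesis
    unfolding subspace_dist_def using dim_subset_UNIV_cart_gen[of "vec.span (X \<union> Y)"] by simp
qed

lemma dS_isometry_perp: "dS_isometry (perp :: ('a::{field,finite}^'n) set \<Rightarrow> _)"
  unfolding dS_isometry_def
proof
  show "bij_betw perp subspaces (subspaces :: ('a^'n) set set)"
    by (rule bij_betw_byWitness[where f'=perp]) (auto simp: subspaces_def perp_perp subspace_perp)
  show "\<forall>X\<in>subspaces. \<forall>Y\<in>subspaces. subspace_dist (perp X) (perp Y) = subspace_dist X (Y :: ('a^'n) set)"
    by (auto simp: subspaces_def subspace_dist_perp)
qed

lemma bij_betw_perp_grassmannian: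
  assumes "i \<le> CARD('n)"
  shows "bij_betw perp (grassmannian (UNIV::('a::{field,finite}^'n) set) i)
           (grassmannian UNIV (CARD('n) - i))"
  by (rule bij_betw_byWitness[where f'=perp])
    (use assms in \<open>auto simp: grassmannian_def subspace_perp dim_perp perp_perp\<close>)

lemma card_grassmannian_complement:
  assumes "i \<le> CARD('n)"
  shows "card (grassmannian (UNIV::('a::{field,finite}^'n) set) (CARD('n) - i))
       = card (grassmannian (UNIV::('a^'n) set) i)"
  using bij_betw_same_card[OF bij_betw_perp_grassmannian[OF assms]] by (rule sym)

lemma bij_betw_perp_superspaces:
  fixes X :: "('a::{field,finite}^'n) set"
  assumes X: "vec.subspace X" and j: "j \<le> CARD('n)"
  shows "bij_betw perp {Y \<in> grassmannian UNIV j. X \<subseteq> Y} (grassmannian (perp X) (CARD('n) - j))"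
proof (rule bij_betw_byWitness[where f'=perp])
  show "perp ` {Y \<in> grassmannian UNIV j. X \<subseteq> Y} \<subseteq> grassmannian (perp X) (CARD('n) - j)"
  proof (rule image_subsetI)
    fix Y assume "Y \<in> {Y \<in> grassmannian UNIV j. X \<subseteq> Y}"
    then show "perp Y \<in> grassmannian (perp X) (CARD('n) - j)"
      using perp_antimono[of X Y] by (simp add: grassmannian_def subspace_perp dim_perp)
  qed
  show "perp ` grassmannian (perp X) (CARD('n) - j) \<subseteq> {Y \<in> grassmannian UNIV j. X \<subseteq> Y}"
  proof (rule image_subsetI)
    fix Z assume "Z \<in> grassmannian (perp X) (CARD('n) - j)"
    then show "perp Z \<in> {Y \<in> grassmannian UNIV j. X \<subseteq> Y}"
      using j perp_antimono[of Z "perp X"] perp_perp[OF X]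
      by (simp add: grassmannian_def subspace_perp dim_perp)
  qed
qed (auto simp: grassmannian_def perp_perp)

lemma card_superspaces:
  fixes X :: "('a::{field,finite}^'n) set"
  assumes X: "vec.subspace X" and "vec.dim X \<le> j" "j \<le> CARD('n)"
  shows "card {Y \<in> grassmannian UNIV j. X \<subseteq> Y}
       = gauss_binom CARD('a) (CARD('n) - vec.dim X) (CARD('n) - j)"
  using bij_betw_same_card[OF bij_betw_perp_superspaces[OF X assms(3)]] assms
    card_grassmannian[OF subspace_perp, of "CARD('n) - j" X]
  by (simp add: dim_perp)

section \<open>Consecutive levels of a code\<close>

lemma sum_card_related_swap:
  assumes "finite A" "finite B"
  shows "(\<Sum>a\<in>A. card {b \<in> B. R a b}) = (\<Sum>b\<in>B. card {a \<in> A. R a b})"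
proof -
  have "(\<Sum>a\<in>A. card {b \<in> B. R a b}) = (\<Sum>a\<in>A. \<Sum>b\<in>B. if R a b then 1 else 0)"
    using assms by (simp add: sum.If_cases Int_def)
  also have "\<dots> = (\<Sum>b\<in>B. \<Sum>a\<in>A. if R a b then 1 else 0)" by (rule sum.swap)
  also have "\<dots> = (\<Sum>b\<in>B. card {a \<in> A. R a b})"
    using assms by (simp add: sum.If_cases Int_def)
  finally show ?thesis .
qed

lemma biregular_normalized_matching:
  fixes R :: "'a \<Rightarrow> 'b \<Rightarrow> bool"
  assumes A: "finite A" and B: "finite B" and S: "S \<subseteq> A"
    and up: "\<And>a. a \<in> A \<Longrightarrow> card {b \<in> B. R a b} = u"
    and down: "\<And>b. b \<in> B \<Longrightarrow> card {a \<in> A. R a b} = d" and "0 < d"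
  shows "card S * card B \<le> card {b \<in> B. \<exists>a\<in>S. R a b} * card A"
proof -
  let ?N = "{b \<in> B. \<exists>a\<in>S. R a b}"
  have fin_S: "finite S" using A S by (rule finite_subset[rotated])
  have "card S * u = (\<Sum>a\<in>S. card {b \<in> B. R a b})" using S up by (simp add: subset_iff)
  also have "\<dots> = (\<Sum>b\<in>B. card {a \<in> S. R a b})" by (rule sum_card_related_swap[OF fin_S B])
  also have "\<dots> \<le> (\<Sum>b\<in>B. if b \<in> ?N then d else 0)"
  proof (rule sum_mono)
    fix b assume "b \<in> B"
    have "card {a \<in> S. R a b} \<le> card {a \<in> A. R a b}" using A S by (intro card_mono) auto
    then show "card {a \<in> S. R a b} \<le> (if b \<in> ?N then d else 0)"
      using down[OF \<open>b \<in> B\<close>] \<open>b \<in> B\<close> by (auto simp: card_eq_0_iff)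
  qed
  also have "\<dots> = card ?N * d" using B by (simp add: sum.If_cases Int_def)
  finally have S_edges: "card S * u \<le> card ?N * d" .
  have "card A * u = (\<Sum>a\<in>A. card {b \<in> B. R a b})" using up by simp
  also have "\<dots> = (\<Sum>b\<in>B. card {a \<in> A. R a b})" by (rule sum_card_related_swap[OF A B])
  also have "\<dots> = card B * d" using down by simp
  finally have all_edges: "card A * u = card B * d" .
  have "card S * card B * d = card S * (card A * u)" by (simp add: all_edges mult.assoc)
  also have "\<dots> = card A * (card S * u)" by (rule mult.left_commute)
  also have "\<dots> \<le> card A * (card ?N * d)" using S_edges by (rule mult_le_mono2)
  also have "\<dots> = card ?N * card A * d" by (simp only: ac_simps)
  finally show ?thesis using \<open>0 < d\<close> by simp
qed

lemma subspace_dist_subset: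
  fixes X Y :: "('a::field^'n) set"
  assumes "vec.subspace Y" "X \<subseteq> Y"
  shows "subspace_dist X Y = vec.dim Y - vec.dim X"
  using assms by (simp add: subspace_dist_def Un_absorb1 Int_absorb2)

lemma grassmannian_normalized_matching:
  fixes S :: "('a::{field,finite}^'n) set set"
  defines "L \<equiv> grassmannian (UNIV::('a^'n) set)"
  assumes S: "S \<subseteq> L i" and i: "Suc i \<le> CARD('n)"
  shows "card S * card (L (Suc i)) \<le> card {Y \<in> L (Suc i). \<exists>X\<in>S. X \<subseteq> Y} * card (L i)"
proof (rule biregular_normalized_matching)
  fix X assume "X \<in> L i"
  then have "vec.subspace X" "vec.dim X = i" by (auto simp: L_def grassmannian_def)
  then show "card {Y \<in> L (Suc i). X \<subseteq> Y} = gauss_binom CARD('a) (CARD('n) - i) (CARD('n) - Suc i)"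
    using card_superspaces[of X "Suc i"] i by (simp add: L_def)
next
  fix Y assume "Y \<in> L (Suc i)"
  then have Y: "vec.subspace Y" "vec.dim Y = Suc i" by (auto simp: L_def grassmannian_def)
  have "{X \<in> L i. X \<subseteq> Y} = grassmannian Y i" by (auto simp: L_def grassmannian_def)
  then show "card {X \<in> L i. X \<subseteq> Y} = gauss_binom CARD('a) (Suc i) i"
    using card_grassmannian[OF Y(1)] Y(2) by simp
next
  obtain Y where "Y \<in> L (Suc i)"
    using card_grassmannian_UNIV_pos[of "Suc i"] i by (auto simp: L_def card_gt_0_iff)
  then have "vec.subspace Y" "vec.dim Y = Suc i" by (auto simp: L_def grassmannian_def)
  then show "0 < gauss_binom CARD('a) (Suc i) i"
    using card_grassmannian_pos[of Y i] card_grassmannian[of Y i] by simp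
qed (use S in \<open>auto simp: L_def\<close>)

text \<open>Members of C on consecutive levels cannot be nested (they would be at distance 1), so the
  upper ones avoid the neighbourhood of the lower ones.\<close>

lemma code_adjacent_levels:
  fixes C :: "('a::{field,finite}^'n) set set"
  assumes C: "is_code 2 C" and i: "Suc i \<le> CARD('n)"
  defines "L \<equiv> grassmannian (UNIV::('a^'n) set)"
  shows "card (C \<inter> L i) * card (L (Suc i)) + card (C \<inter> L (Suc i)) * card (L i)
       \<le> card (L i) * card (L (Suc i))"
proof -
  let ?M = "{Y \<in> L (Suc i). \<exists>X\<in>C \<inter> L i. X \<subseteq> Y}"
  have matching: "card (C \<inter> L i) * card (L (Suc i)) \<le> card ?M * card (L i)"
    unfolding L_def using i by (intro grassmannian_normalized_matching) auto
  have "Y \<notin> C" if "Y \<in> ?M" for Y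
  proof
    assume "Y \<in> C"
    from that obtain X where X: "X \<in> C" "X \<in> L i" "X \<subseteq> Y" and Y: "Y \<in> L (Suc i)"
      by blast
    have "subspace_dist X Y = 1"
      using X Y subspace_dist_subset[of Y X] by (simp add: L_def grassmannian_def)
    moreover have "X \<noteq> Y" using X Y by (auto simp: L_def grassmannian_def)
    then have "2 \<le> subspace_dist X Y"
      using C X(1) \<open>Y \<in> C\<close> unfolding is_code_def by blast
    ultimately show False by simp
  qed
  then have "card (?M \<union> (C \<inter> L (Suc i))) = card ?M + card (C \<inter> L (Suc i))"
    by (intro card_Un_disjoint) auto
  moreover have "card (?M \<union> (C \<inter> L (Suc i))) \<le> card (L (Suc i))"
    by (rule card_mono) (auto simp: L_def)
  ultimately have "card ?M + card (C \<inter> L (Suc i)) \<le> card (L (Suc i))" by simp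
  from mult_le_mono1[OF this, of "card (L i)"]
  have "card ?M * card (L i) + card (C \<inter> L (Suc i)) * card (L i) \<le> card (L i) * card (L (Suc i))"
    by (simp only: add_mult_distrib mult.commute[of "card (L (Suc i))"])
  with matching show ?thesis by linarith
qed

section \<open>Parity classes and level densities\<close>

lemma two_le_subspace_dist_if_same_parity:
  fixes X Y :: "('a::field^'n) set"
  assumes X: "vec.subspace X" and Y: "vec.subspace Y" and "X \<noteq> Y"
    and parity: "vec.dim X mod 2 = vec.dim Y mod 2"
  shows "2 \<le> subspace_dist X Y"
proof (rule ccontr)
  let ?I = "X \<inter> Y" and ?Z = "vec.span (X \<union> Y)"
  assume "\<not> 2 \<le> subspace_dist X Y"
  then have Z: "vec.dim ?Z \<le> Suc (vec.dim ?I)" by (simp add: subspace_dist_def)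
  have I: "vec.dim ?I \<le> vec.dim X" "vec.dim ?I \<le> vec.dim Y"
    by (auto intro: vec.dim_subset)
  have XY: "vec.dim X \<le> vec.dim ?Z" "vec.dim Y \<le> vec.dim ?Z"
    by (auto intro: vec.dim_subset vec.span_base)
  have "vec.dim X = vec.dim ?I \<or> vec.dim X = Suc (vec.dim ?I)"
    "vec.dim Y = vec.dim ?I \<or> vec.dim Y = Suc (vec.dim ?I)"
    using I XY Z by arith+
  moreover have "even (vec.dim X) \<longleftrightarrow> even (vec.dim Y)"
    using parity by (simp add: even_iff_mod_2_eq_zero)
  ultimately consider "vec.dim ?I = vec.dim X" "vec.dim ?I = vec.dim Y"
    | "vec.dim ?Z = vec.dim X" "vec.dim ?Z = vec.dim Y"
    using XY Z by fastforce
  then show False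
  proof cases
    case 1
    then have "?I = X" "?I = Y"
      using vec.subspace_dim_equal[OF vec.subspace_inter[OF X Y]] X Y by auto
    then show False using \<open>X \<noteq> Y\<close> by simp
  next
    case 2
    moreover have "X \<subseteq> ?Z" "Y \<subseteq> ?Z" by (auto intro: vec.span_base)
    ultimately have "X = ?Z" "Y = ?Z"
      using vec.subspace_dim_equal[OF X vec.subspace_span] vec.subspace_dim_equal[OF Y vec.subspace_span]
      by auto
    then show False using \<open>X \<noteq> Y\<close> by simp
  qed
qed

definition parity_class :: "nat \<Rightarrow> ('a::field^'n) set set" where
  "parity_class p = {X \<in> subspaces. vec.dim X mod 2 = p}"

lemma parity_class_is_code: "is_code 2 (parity_class p)"
  unfolding is_code_def parity_class_def
  by (auto simp: subspaces_def intro: two_le_subspace_dist_if_same_parity)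

lemma parity_class_inter_grassmannian:
  "parity_class p \<inter> grassmannian UNIV i = (if i mod 2 = p then grassmannian UNIV i else {})"
  by (auto simp: parity_class_def grassmannian_def subspaces_def)

lemma card_eq_sum_card_levels:
  fixes C :: "('a::{field,finite}^'n) set set"
  assumes "C \<subseteq> subspaces"
  shows "card C = (\<Sum>i\<le>CARD('n). card (C \<inter> grassmannian UNIV i))"
proof -
  have "card C = (\<Sum>i\<le>CARD('n). card {X \<in> C. vec.dim X = i})"
    by (rule card_eq_sum_card_fibres) (auto simp: dim_subset_UNIV_cart_gen)
  also have "\<dots> = (\<Sum>i\<le>CARD('n). card (C \<inter> grassmannian UNIV i))"
    using assms by (intro sum.cong refl arg_cong[where f=card])
      (auto simp: grassmannian_def subspaces_def)
  finally show ?thesis .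
qed

lemma card_parity_class:
  "card (parity_class p :: ('a::{field,finite}^'n) set set)
     = (\<Sum>i\<in>{i. i \<le> CARD('n) \<and> i mod 2 = p}. gauss_binom CARD('a) CARD('n) i)"
proof -
  have "card (parity_class p :: ('a^'n) set set)
      = (\<Sum>i\<le>CARD('n). card (parity_class p \<inter> grassmannian (UNIV::('a^'n) set) i))"
    by (rule card_eq_sum_card_levels) (auto simp: parity_class_def)
  also have "\<dots> = (\<Sum>i\<le>CARD('n). if i mod 2 = p then card (grassmannian (UNIV::('a^'n) set) i) else 0)"
    by (intro sum.cong refl) (simp add: parity_class_inter_grassmannian)
  also have "\<dots> = (\<Sum>i\<in>{i. i \<le> CARD('n) \<and> i mod 2 = p}. gauss_binom CARD('a) CARD('n) i)"
    by (simp add: sum.inter_filter[symmetric] card_grassmannian_UNIV conj_commute)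
  finally show ?thesis .
qed

definition level_density :: "('a::field^'n) set set \<Rightarrow> nat \<Rightarrow> real" where
  "level_density C i =
     card (C \<inter> grassmannian UNIV i) / card (grassmannian (UNIV::('a^'n) set) i)"

lemma level_density_le_one: "level_density (C :: ('a::{field,finite}^'n) set set) i \<le> 1"
proof -
  have "card (C \<inter> grassmannian UNIV i) \<le> card (grassmannian (UNIV::('a^'n) set) i)"
    by (rule card_mono) auto
  then show ?thesis
    by (cases "card (grassmannian (UNIV::('a^'n) set) i) = 0")
      (simp_all add: level_density_def divide_le_eq_1 card_gt_0_iff)
qed

lemma level_density_adjacent_le:
  fixes C :: "('a::{field,finite}^'n) set set"
  assumes "is_code 2 C" and i: "i < CARD('n)"
  shows "level_density C i + level_density C (Suc i) \<le> 1"
proof -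
  let ?a = "card (C \<inter> grassmannian UNIV i)" and ?b = "card (C \<inter> grassmannian UNIV (Suc i))"
  let ?A = "card (grassmannian (UNIV::('a^'n) set) i)"
  let ?B = "card (grassmannian (UNIV::('a^'n) set) (Suc i))"
  have pos: "0 < real ?A" "0 < real ?B"
    using i card_grassmannian_UNIV_pos[where 'a='a and 'n='n] by auto
  then have "level_density C i + level_density C (Suc i)
      = (real ?a * real ?B + real ?b * real ?A) / (real ?A * real ?B)"
    unfolding level_density_def by (intro add_frac_eq) auto
  also have "\<dots> \<le> 1"
    using code_adjacent_levels[OF assms(1)] i pos
    by (simp add: divide_le_eq_1_pos flip: of_nat_mult of_nat_add)
  finally show ?thesis .
qed

lemma card_eq_sum_level_density:
  fixes C :: "('a::{field,finite}^'n) set set"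
  assumes "C \<subseteq> subspaces"
  shows "real (card C)
       = (\<Sum>i\<le>CARD('n). real (card (grassmannian (UNIV::('a^'n) set) i)) * level_density C i)"
proof -
  have "real (card (grassmannian (UNIV::('a^'n) set) i)) * level_density C i
      = real (card (C \<inter> grassmannian UNIV i))" if "i \<le> CARD('n)" for i
    using that card_grassmannian_UNIV_pos[of i] by (simp add: level_density_def)
  then show ?thesis by (simp add: card_eq_sum_card_levels[OF assms])
qed

lemma level_density_parity_class:
  assumes "i \<le> CARD('n)"
  shows "level_density (parity_class p :: ('a::{field,finite}^'n) set set) i
       = (if i mod 2 = p then 1 else 0)"
  using assms card_grassmannian_UNIV_pos[of i, where 'a='a and 'n='n]
  by (auto simp: level_density_def parity_class_inter_grassmannian)

lemma level_density_parity_class_adjacent: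
  assumes "p < 2" and "i < CARD('n)"
  shows "level_density (parity_class p :: ('a::{field,finite}^'n) set set) i
       + level_density (parity_class p :: ('a^'n) set set) (Suc i) = 1"
  using assms by (cases "even i") (auto simp: level_density_parity_class mod_2_eq_odd)

lemma eq_parity_class_of_level_density:
  fixes C :: "('a::{field,finite}^'n) set set"
  assumes C: "C \<subseteq> subspaces"
    and density: "\<And>i. i \<le> CARD('n) \<Longrightarrow> level_density C i = (if i mod 2 = p then 1 else 0)"
  shows "C = parity_class p"
proof -
  let ?G = "grassmannian (UNIV::('a^'n) set)"
  have level: "C \<inter> ?G i = parity_class p \<inter> ?G i" if i: "i \<le> CARD('n)" for i
  proof -
    have pos: "0 < card (?G i)" using i by (rule card_grassmannian_UNIV_pos)
    show ?thesis
    proof (cases "i mod 2 = p")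
      case True
      then have "card (C \<inter> ?G i) = card (?G i)"
        using density[OF i] pos by (simp add: level_density_def)
      then show ?thesis using True by (simp add: parity_class_inter_grassmannian card_subset_eq)
    next
      case False
      then show ?thesis
        using density[OF i] pos by (auto simp: level_density_def parity_class_inter_grassmannian)
    qed
  qed
  have in_level: "X \<in> ?G (vec.dim X)" "vec.dim X \<le> CARD('n)" if "X \<in> subspaces" for X
    using that dim_subset_UNIV_cart_gen by (auto simp: grassmannian_def subspaces_def)
  show ?thesis
  proof (intro set_eqI iffI)
    fix X assume "X \<in> C"
    then have "X \<in> C \<inter> ?G (vec.dim X)" "vec.dim X \<le> CARD('n)" using C in_level by auto
    then show "X \<in> parity_class p" using level by blast
  next
    fix X :: "('a^'n) set" assume "X \<in> parity_class p"
    then have "X \<in> parity_class p \<inter> ?G (vec.dim X)" "vec.dim X \<le> CARD('n)"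
      using in_level by (auto simp: parity_class_def)
    then show "X \<in> C" using level by blast
  qed
qed

lemma alternating_of_adjacent_sums_eq_1:
  fixes x :: "nat \<Rightarrow> real"
  assumes adj: "\<And>i. i < v \<Longrightarrow> x i + x (Suc i) = 1" and "i \<le> v"
  shows "x i = (if even i then x 0 else 1 - x 0)"
  using \<open>i \<le> v\<close>
proof (induction i)
  case (Suc i)
  then show ?case using adj[of i] by (auto simp: algebra_simps)
qed simp

lemma grassmannian_UNIV_0: "grassmannian (UNIV::('a::field^'n) set) 0 = {{0}}"
proof (intro set_eqI iffI)
  fix X :: "('a^'n) set" assume "X \<in> grassmannian UNIV 0"
  then have "vec.subspace X" "X \<subseteq> {0}" by (auto simp: grassmannian_def)
  then show "X \<in> {{0}}" using vec.subspace_0 by blast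
qed (auto simp: grassmannian_def)

lemma level_density_0: "level_density C 0 = (if {0} \<in> C then 1 else 0)"
  by (simp add: level_density_def grassmannian_UNIV_0 Int_insert_right)

lemma eq_parity_class_if_adjacent_level_densities_sum_1:
  fixes C :: "('a::{field,finite}^'n) set set"
  assumes C: "C \<subseteq> subspaces"
    and adj: "\<And>i. i < CARD('n) \<Longrightarrow> level_density C i + level_density C (Suc i) = 1"
  shows "\<exists>p<2. C = parity_class p"
proof (intro exI conjI)
  show "C = parity_class (if {0} \<in> C then 0 else 1)"
  proof (rule eq_parity_class_of_level_density[OF C])
    fix i assume "i \<le> CARD('n)"
    with adj have alt: "level_density C i = (if even i then level_density C 0 else 1 - level_density C 0)"
      by (rule alternating_of_adjacent_sums_eq_1)
    then show "level_density C i = (if i mod 2 = (if {0} \<in> C then 0 else 1) then 1 else 0)"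
      by (auto simp: level_density_0 mod_2_eq_odd)
  qed
qed simp

section \<open>A linear programming bound\<close>

lemma weighted_sum_slack_eq:
  fixes N w u x :: "nat \<Rightarrow> real"
  assumes N0: "N 0 = w 0 + u 0"
    and N_Suc: "\<And>i. i < v \<Longrightarrow> N (Suc i) = w i + w (Suc i) + u (Suc i)"
  shows "j \<le> v \<Longrightarrow>
    (\<Sum>i\<le>j. N i * x i) + (\<Sum>i<j. w i * (1 - x i - x (Suc i))) + (\<Sum>i\<le>j. u i * (1 - x i))
      = (\<Sum>i<j. w i) + (\<Sum>i\<le>j. u i) + w j * x j"
proof (induction j)
  case 0
  show ?case by (simp add: N0 algebra_simps)
next
  case (Suc j)
  then have IH: "(\<Sum>i\<le>j. N i * x i) + (\<Sum>i<j. w i * (1 - x i - x (Suc i))) + (\<Sum>i\<le>j. u i * (1 - x i))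
      = (\<Sum>i<j. w i) + (\<Sum>i\<le>j. u i) + w j * x j" by simp
  have "N (Suc j) * x (Suc j) + w j * (1 - x j - x (Suc j)) + u (Suc j) * (1 - x (Suc j))
      = w j + u (Suc j) + w (Suc j) * x (Suc j) - w j * x j"
    using N_Suc[of j] Suc.prems by (simp add: algebra_simps)
  with IH show ?case by (simp only: sum.atMost_Suc sum.lessThan_Suc)
qed

text \<open>Weak duality for the linear program maximizing the weighted sum of x subject to
  x i + x (i + 1) \<le> 1 and x i \<le> 1: the weights w and u form a dual solution, and complementary
  slackness identifies the optimal x.\<close>

lemma weighted_sum_le_of_dual_weights:
  fixes N w u x y :: "nat \<Rightarrow> real"
  assumes N0: "N 0 = w 0 + u 0"
    and N_Suc: "\<And>i. i < v \<Longrightarrow> N (Suc i) = w i + w (Suc i) + u (Suc i)"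
    and "w v = 0" and w_pos: "\<And>i. i < v \<Longrightarrow> 0 < w i" and u_nonneg: "\<And>i. i \<le> v \<Longrightarrow> 0 \<le> u i"
    and x_adj: "\<And>i. i < v \<Longrightarrow> x i + x (Suc i) \<le> 1" and x_le: "\<And>i. i \<le> v \<Longrightarrow> x i \<le> 1"
    and y_adj: "\<And>i. i < v \<Longrightarrow> y i + y (Suc i) = 1"
    and y_tight: "\<And>i. i \<le> v \<Longrightarrow> 0 < u i \<Longrightarrow> y i = 1"
  shows "(\<Sum>i\<le>v. N i * x i) \<le> (\<Sum>i\<le>v. N i * y i)"
    and "(\<Sum>i\<le>v. N i * x i) = (\<Sum>i\<le>v. N i * y i) \<Longrightarrow>
      (\<forall>i<v. x i + x (Suc i) = 1) \<and> (\<forall>i\<le>v. 0 < u i \<longrightarrow> x i = 1)"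
proof -
  define slack :: "(nat \<Rightarrow> real) \<Rightarrow> real" where "slack z =
    (\<Sum>i<v. w i * (1 - z i - z (Suc i))) + (\<Sum>i\<le>v. u i * (1 - z i))" for z :: "nat \<Rightarrow> real"
  have balance: "(\<Sum>i\<le>v. N i * z i) + slack z = (\<Sum>i<v. w i) + (\<Sum>i\<le>v. u i)" for z
    using weighted_sum_slack_eq[OF N0 N_Suc order_refl, where x=z] \<open>w v = 0\<close>
    by (simp add: slack_def add.assoc)
  have "(\<Sum>i<v. w i * (1 - y i - y (Suc i))) = 0"
    by (intro sum.neutral ballI) (simp add: diff_diff_eq y_adj)
  moreover have "(\<Sum>i\<le>v. u i * (1 - y i)) = 0"
  proof (intro sum.neutral ballI)
    fix i assume "i \<in> {..v}"
    then show "u i * (1 - y i) = 0" using y_tight[of i] u_nonneg[of i] by (cases "0 < u i") auto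
  qed
  ultimately have "slack y = 0" by (simp add: slack_def)
  have adj_terms: "0 \<le> w i * (1 - x i - x (Suc i))" if "i < v" for i
    using w_pos[OF that] x_adj[OF that] by simp
  have top_terms: "0 \<le> u i * (1 - x i)" if "i \<le> v" for i
    using u_nonneg[OF that] x_le[OF that] by simp
  have adj_sum: "0 \<le> (\<Sum>i<v. w i * (1 - x i - x (Suc i)))" by (rule sum_nonneg) (simp add: adj_terms)
  have top_sum: "0 \<le> (\<Sum>i\<le>v. u i * (1 - x i))" by (rule sum_nonneg) (simp add: top_terms)
  show "(\<Sum>i\<le>v. N i * x i) \<le> (\<Sum>i\<le>v. N i * y i)"
    using balance[of x] balance[of y] \<open>slack y = 0\<close> adj_sum top_sum by (simp add: slack_def)
  assume "(\<Sum>i\<le>v. N i * x i) = (\<Sum>i\<le>v. N i * y i)"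
  then have "(\<Sum>i<v. w i * (1 - x i - x (Suc i))) = 0" "(\<Sum>i\<le>v. u i * (1 - x i)) = 0"
    using balance[of x] balance[of y] \<open>slack y = 0\<close> adj_sum top_sum by (simp_all add: slack_def)
  then have "\<forall>i<v. w i * (1 - x i - x (Suc i)) = 0" "\<forall>i\<le>v. u i * (1 - x i) = 0"
    using sum_nonneg_eq_0_iff[of "{..<v}" "\<lambda>i. w i * (1 - x i - x (Suc i))"]
      sum_nonneg_eq_0_iff[of "{..v}" "\<lambda>i. u i * (1 - x i)"] adj_terms top_terms
    by auto
  then show "(\<forall>i<v. x i + x (Suc i) = 1) \<and> (\<forall>i\<le>v. 0 < u i \<longrightarrow> x i = 1)"
    using w_pos by fastforce
qed

fun alternating_sum :: "(nat \<Rightarrow> real) \<Rightarrow> nat \<Rightarrow> real" where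
  "alternating_sum N 0 = N 0"
| "alternating_sum N (Suc j) = N (Suc j) - alternating_sum N j"

lemma alternating_sum_bounds:
  fixes N :: "nat \<Rightarrow> real"
  assumes "0 < N 0" and incr: "\<And>i. 2 * Suc i < v \<Longrightarrow> N i < N (Suc i)"
  shows "2 * j < v \<Longrightarrow> 0 < alternating_sum N j \<and> alternating_sum N j \<le> N j"
proof (induction j)
  case (Suc j)
  then show ?case using incr[of j] by auto
qed (use assms(1) in simp)

text \<open>The dual weights: on the lower half of 0..v the constraint x i + x (i + 1) \<le> 1 gets the
  alternating sum N i - N (i - 1) + N (i - 2) - ..., mirrored on the upper half; for even v the
  remaining mass at the middle level v/2 goes to the constraint x (v/2) \<le> 1.\<close>

definition dual_weight :: "(nat \<Rightarrow> real) \<Rightarrow> nat \<Rightarrow> nat \<Rightarrow> real" where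
  "dual_weight N v i = (if i < v then alternating_sum N (min i (v - 1 - i)) else 0)"

lemma dual_weight_pos:
  fixes N :: "nat \<Rightarrow> real"
  assumes "0 < N 0" "\<And>i. 2 * Suc i < v \<Longrightarrow> N i < N (Suc i)" "i < v"
  shows "0 < dual_weight N v i"
proof -
  have "2 * min i (v - 1 - i) < v" using assms(3) by (cases "i \<le> v - 1 - i") (auto simp: min_def)
  then show ?thesis
    using alternating_sum_bounds[where N=N and v=v, OF assms(1,2)] assms(3)
    by (simp add: dual_weight_def)
qed

lemma dual_weight_balance:
  fixes N :: "nat \<Rightarrow> real"
  assumes sym: "\<And>i. i \<le> v \<Longrightarrow> N (v - i) = N i" and "0 < v" and "i \<le> v" and "2 * i \<noteq> v"
  shows "N i = dual_weight N v i + (if i = 0 then 0 else dual_weight N v (i - 1))"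
proof -
  let ?a = "alternating_sum N"
  consider "i = 0" | "0 < i" "2 * i < v" | "v < 2 * i" "i < v" | "i = v"
    using assms by linarith
  then show ?thesis
  proof cases
    case 1
    then show ?thesis using \<open>0 < v\<close> by (simp add: dual_weight_def)
  next
    case 2
    then have "min i (v - 1 - i) = i" "min (i - 1) (v - 1 - (i - 1)) = i - 1" "i - 1 < v" by auto
    moreover have "?a i = N i - ?a (i - 1)" using \<open>0 < i\<close> by (cases i) auto
    ultimately show ?thesis using 2 by (simp add: dual_weight_def)
  next
    case 3
    then have "min i (v - 1 - i) = v - i - 1" "min (i - 1) (v - 1 - (i - 1)) = v - i" "i - 1 < v"
      by auto
    moreover have "?a (v - i) = N (v - i) - ?a (v - i - 1)" using 3 by (cases "v - i") auto
    ultimately show ?thesis using 3 sym[of i] by (simp add: dual_weight_def)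
  next
    case 4
    then show ?thesis using sym[of v] \<open>0 < v\<close> by (simp add: dual_weight_def)
  qed
qed

lemma dual_weight_middle:
  fixes N :: "nat \<Rightarrow> real"
  assumes "0 < N 0" "\<And>i. 2 * Suc i < v \<Longrightarrow> N i < N (Suc i)"
    and mid: "\<And>i. 2 * Suc i = v \<Longrightarrow> 2 * N i < N (Suc i)" and v: "v = 2 * Suc k"
  shows "dual_weight N v (Suc k) + dual_weight N v k < N (Suc k)"
proof -
  have "dual_weight N v (Suc k) = alternating_sum N k" "dual_weight N v k = alternating_sum N k"
    using v by (simp_all add: dual_weight_def)
  moreover have "alternating_sum N k \<le> N k"
    using alternating_sum_bounds[where N=N and v=v and j=k, OF assms(1,2)] v by simp
  ultimately show ?thesis using mid[of k] v by simp
qed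

lemma dual_weights_of_symmetric_unimodal:
  fixes N :: "nat \<Rightarrow> real"
  assumes sym: "\<And>i. i \<le> v \<Longrightarrow> N (v - i) = N i" and "0 < v" and "0 < N 0"
    and incr: "\<And>i. 2 * Suc i < v \<Longrightarrow> N i < N (Suc i)"
    and mid: "\<And>i. 2 * Suc i = v \<Longrightarrow> 2 * N i < N (Suc i)"
  obtains w u :: "nat \<Rightarrow> real" where
    "N 0 = w 0 + u 0" "\<And>i. i < v \<Longrightarrow> N (Suc i) = w i + w (Suc i) + u (Suc i)" "w v = 0"
    "\<And>i. i < v \<Longrightarrow> 0 < w i" "\<And>i. i \<le> v \<Longrightarrow> 0 \<le> u i"
    "\<And>i. i \<le> v \<Longrightarrow> 0 < u i \<longleftrightarrow> 2 * i = v"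
proof -
  let ?w = "dual_weight N v"
  define u where "u i = N i - ?w i - (if i = 0 then 0 else ?w (i - 1))" for i
  have u_zero: "u i = 0" if "i \<le> v" "2 * i \<noteq> v" for i
    using dual_weight_balance[where N=N and v=v, OF sym \<open>0 < v\<close> that] by (simp add: u_def)
  have u_pos: "0 < u i" if middle: "2 * i = v" for i
  proof -
    obtain k where "i = Suc k" using middle \<open>0 < v\<close> by (cases i) auto
    moreover have "v = 2 * Suc k" using middle \<open>i = Suc k\<close> by simp
    ultimately show ?thesis
      using dual_weight_middle[OF \<open>0 < N 0\<close> incr mid] by (simp add: u_def)
  qed
  show thesis
  proof (rule that[of ?w u])
    show "N 0 = ?w 0 + u 0" by (simp add: u_def)
    show "N (Suc i) = ?w i + ?w (Suc i) + u (Suc i)" if "i < v" for i by (simp add: u_def)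
    show "?w v = 0" by (simp add: dual_weight_def)
    show "0 < ?w i" if "i < v" for i by (rule dual_weight_pos[OF \<open>0 < N 0\<close> incr that])
    show "0 \<le> u i" if "i \<le> v" for i using u_zero[OF that] u_pos by (cases "2 * i = v") auto
    show "0 < u i \<longleftrightarrow> 2 * i = v" if "i \<le> v" for i
      using u_zero[OF that] u_pos by (cases "2 * i = v") auto
  qed
qed

section \<open>The optimal codes\<close>

lemma grassmannian_dual_weights:
  "\<exists>w u :: nat \<Rightarrow> real.
    real (card (grassmannian (UNIV::('a::{field,finite}^'n) set) 0)) = w 0 + u 0 \<and>
    (\<forall>i<CARD('n).
      real (card (grassmannian (UNIV::('a^'n) set) (Suc i))) = w i + w (Suc i) + u (Suc i)) \<and>
    w CARD('n) = 0 \<and> (\<forall>i<CARD('n). 0 < w i) \<and> (\<forall>i\<le>CARD('n). 0 \<le> u i) \<and>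
    (\<forall>i\<le>CARD('n). 0 < u i \<longleftrightarrow> 2 * i = CARD('n))"
proof -
  let ?N = "\<lambda>i. real (card (grassmannian (UNIV::('a^'n) set) i))"
  have double: "2 * ?N i < ?N (Suc i)" if "2 * Suc i \<le> CARD('n)" for i
    using two_mul_card_grassmannian_less[OF vec.subspace_UNIV, of i, where 'a='a and 'n='n] that
    by (simp add: card_cart_basis flip: of_nat_mult of_nat_less_iff)
  have complement: "?N (CARD('n) - i) = ?N i" if "i \<le> CARD('n)" for i
    using card_grassmannian_complement[OF that, where 'a='a] by simp
  have N0: "0 < ?N 0" using card_grassmannian_UNIV_pos[of 0, where 'a='a and 'n='n] by simp
  have incr: "?N i < ?N (Suc i)" if "2 * Suc i < CARD('n)" for i using double[of i] that by simp
  have mid: "2 * ?N i < ?N (Suc i)" if "2 * Suc i = CARD('n)" for i using double[of i] that by simp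
  obtain w u where "?N 0 = w 0 + u 0"
    "\<And>i. i < CARD('n) \<Longrightarrow> ?N (Suc i) = w i + w (Suc i) + u (Suc i)" "w CARD('n) = 0"
    "\<And>i. i < CARD('n) \<Longrightarrow> 0 < w i" "\<And>i. i \<le> CARD('n) \<Longrightarrow> 0 \<le> u i"
    "\<And>i. i \<le> CARD('n) \<Longrightarrow> 0 < u i \<longleftrightarrow> 2 * i = CARD('n)"
    using dual_weights_of_symmetric_unimodal[where N="?N" and v="CARD('n)",
          OF complement zero_less_card_finite N0 incr mid] by blast
  then show ?thesis by (intro exI[where x=w] exI[where x=u]) simp
qed

lemma parity_class_maximum:
  fixes C :: "('a::{field,finite}^'n) set set"
  assumes C: "is_code 2 C" and p: "p < 2" and mid: "even CARD('n) \<Longrightarrow> p = CARD('n) div 2 mod 2"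
  shows "card C \<le> card (parity_class p :: ('a^'n) set set)"
    and "card C = card (parity_class p :: ('a^'n) set set) \<Longrightarrow>
      (\<exists>p'<2. C = parity_class p') \<and> (even CARD('n) \<longrightarrow> C = parity_class p)"
proof -
  let ?N = "\<lambda>i. real (card (grassmannian (UNIV::('a^'n) set) i))"
  let ?x = "level_density C" and ?y = "level_density (parity_class p :: ('a^'n) set set)"
  obtain w u where "?N 0 = w 0 + u 0" "\<forall>i<CARD('n). ?N (Suc i) = w i + w (Suc i) + u (Suc i)"
    "w CARD('n) = 0" "\<forall>i<CARD('n). 0 < w i" "\<forall>i\<le>CARD('n). 0 \<le> u i"
    "\<forall>i\<le>CARD('n). 0 < u i \<longleftrightarrow> 2 * i = CARD('n)"
    using grassmannian_dual_weights[where 'a='a and 'n='n] by blast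
  note wu = this[rule_format]
  have y_tight: "?y i = 1" if "i \<le> CARD('n)" "0 < u i" for i
  proof -
    have "CARD('n) = 2 * i" using wu(6) that by auto
    then have "even CARD('n)" "CARD('n) div 2 = i" by simp_all
    then show ?thesis using that(1) mid by (simp add: level_density_parity_class)
  qed
  note bound = weighted_sum_le_of_dual_weights[where N="?N" and v="CARD('n)" and x="?x" and y="?y",
      OF wu(1-5) level_density_adjacent_le[OF C] level_density_le_one
        level_density_parity_class_adjacent[OF p] y_tight]
  have C_sub: "C \<subseteq> subspaces" using C by (simp add: is_code_def)
  have cards: "real (card C) = (\<Sum>i\<le>CARD('n). ?N i * ?x i)"
    "real (card (parity_class p :: ('a^'n) set set)) = (\<Sum>i\<le>CARD('n). ?N i * ?y i)"
    by (rule card_eq_sum_level_density[OF C_sub])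
      (rule card_eq_sum_level_density, auto simp: parity_class_def)
  show "card C \<le> card (parity_class p :: ('a^'n) set set)" using bound(1) cards by simp
  assume "card C = card (parity_class p :: ('a^'n) set set)"
  then have tight: "\<forall>i<CARD('n). ?x i + ?x (Suc i) = 1" "\<forall>i\<le>CARD('n). 0 < u i \<longrightarrow> ?x i = 1"
    using bound(2) cards by simp_all
  obtain p' where "p' < 2" and C_eq: "C = parity_class p'"
    using eq_parity_class_if_adjacent_level_densities_sum_1[OF C_sub] tight(1) by blast
  moreover have "C = parity_class p" if "even CARD('n)"
  proof -
    let ?k = "CARD('n) div 2"
    have "level_density (parity_class p' :: ('a^'n) set set) ?k = 1"
      using tight(2) wu(6)[of ?k] that C_eq by simp
    then have "?k mod 2 = p'" by (simp add: level_density_parity_class split: if_splits)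
    then show ?thesis using C_eq mid[OF that] by simp
  qed
  ultimately show "(\<exists>p'<2. C = parity_class p') \<and> (even CARD('n) \<longrightarrow> C = parity_class p)" by blast
qed

lemma max_code_size_eqI:
  fixes K :: "('a::{field,finite}^'n) set set"
  assumes "is_code d K" and "\<And>C :: ('a^'n) set set. is_code d C \<Longrightarrow> card C \<le> card K"
  shows "max_code_size (T :: ('a^'n) itself) d = card K"
  unfolding max_code_size_def
proof (rule Max_eqI)
  have "{card C |C :: ('a^'n) set set. is_code d C} \<subseteq> card ` (UNIV :: ('a^'n) set set set)"
    by blast
  then show "finite {card C |C :: ('a^'n) set set. is_code d C}" by (rule finite_subset) simp
qed (use assms in auto)

lemma perp_image_parity_class_0:
  assumes "odd CARD('n)"
  shows "perp ` parity_class 0 = (parity_class 1 :: ('a::{field,finite}^'n) set set)"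
proof -
  have parity: "(CARD('n) - d) mod 2 = 1 - d mod 2" if "d \<le> CARD('n)" for d
    using assms that by (auto simp: mod_2_eq_odd even_diff_nat)
  have dim: "vec.dim (perp X) mod 2 = 1 - vec.dim X mod 2" if "vec.subspace X" for X :: "('a^'n) set"
    using dim_perp[OF that] parity[OF dim_subset_UNIV_cart_gen] by simp
  show ?thesis
  proof
    show "perp ` parity_class 0 \<subseteq> (parity_class 1 :: ('a^'n) set set)"
      by (auto simp: parity_class_def subspaces_def subspace_perp dim)
    show "parity_class 1 \<subseteq> perp ` (parity_class 0 :: ('a^'n) set set)"
    proof
      fix Y :: "('a^'n) set" assume "Y \<in> parity_class 1"
      then have "perp Y \<in> parity_class 0" "perp (perp Y) = Y"
        by (auto simp: parity_class_def subspaces_def subspace_perp dim perp_perp)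
      then show "Y \<in> perp ` parity_class 0" by (metis image_eqI)
    qed
  qed
qed

theorem even_dimension_optimal_codes:
  fixes T :: "('a::{field,finite}^'n) itself" and C :: "('a^'n) set set"
  assumes n: "CARD('n) = 2 * k"
  shows "max_code_size T 2 = (\<Sum>i\<in>{i. i \<le> CARD('n) \<and> i mod 2 = k mod 2}. gauss_binom CARD('a) CARD('n) i)"
    and "is_code 2 C \<and> card C = max_code_size T 2 \<longleftrightarrow> C = {X \<in> subspaces. vec.dim X mod 2 = k mod 2}"
proof -
  have mid: "even CARD('n) \<Longrightarrow> k mod 2 = CARD('n) div 2 mod 2" using n by simp
  have max: "max_code_size T 2 = card (parity_class (k mod 2) :: ('a^'n) set set)"
    by (rule max_code_size_eqI[OF parity_class_is_code parity_class_maximum(1)]) (simp_all add: mid)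
  then show "max_code_size T 2 = (\<Sum>i\<in>{i. i \<le> CARD('n) \<and> i mod 2 = k mod 2}. gauss_binom CARD('a) CARD('n) i)"
    by (simp add: card_parity_class)
  have "is_code 2 C \<and> card C = max_code_size T 2 \<longleftrightarrow> C = parity_class (k mod 2)"
  proof
    assume C: "is_code 2 C \<and> card C = max_code_size T 2"
    then have "card C = card (parity_class (k mod 2) :: ('a^'n) set set)" using max by simp
    then have "even CARD('n) \<longrightarrow> C = parity_class (k mod 2)"
      using parity_class_maximum(2)[OF C[THEN conjunct1] _ mid] by simp
    then show "C = parity_class (k mod 2)" using n by simp
  qed (use parity_class_is_code max in simp)
  then show "is_code 2 C \<and> card C = max_code_size T 2 \<longleftrightarrow> C = {X \<in> subspaces. vec.dim X mod 2 = k mod 2}"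
    by (simp add: parity_class_def)
qed

theorem odd_dimension_optimal_codes:
  fixes T :: "('a::{field,finite}^'n) itself"
  assumes n: "CARD('n) = 2 * k + 1"
  shows "max_code_size T 2 = (\<Sum>i\<in>{i. i \<le> CARD('n) \<and> even i}. gauss_binom CARD('a) CARD('n) i)"
      (is ?max_even)
    and "max_code_size T 2 = (\<Sum>i\<in>{i. i \<le> CARD('n) \<and> odd i}. gauss_binom CARD('a) CARD('n) i)"
      (is ?max_odd)
    and "{C :: ('a^'n) set set. is_code 2 C \<and> card C = max_code_size T 2} =
      {{X \<in> subspaces. even (vec.dim X)}, {X \<in> subspaces. odd (vec.dim X)}}" (is ?optimal)
    and "{X \<in> subspaces. even (vec.dim X)} \<noteq> {X :: ('a^'n) set \<in> subspaces. odd (vec.dim X)}"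
      (is ?distinct)
    and "codes_isomorphic {X :: ('a^'n) set \<in> subspaces. even (vec.dim X)}
      {X \<in> subspaces. odd (vec.dim X)}" (is ?isomorphic)
proof -
  have odd: "odd CARD('n)" using n by simp
  have classes: "{X \<in> subspaces. even (vec.dim X)} = (parity_class 0 :: ('a^'n) set set)"
    "{X \<in> subspaces. odd (vec.dim X)} = (parity_class 1 :: ('a^'n) set set)"
    "{i. i \<le> CARD('n) \<and> even i} = {i. i \<le> CARD('n) \<and> i mod 2 = 0}"
    "{i. i \<le> CARD('n) \<and> odd i} = {i. i \<le> CARD('n) \<and> i mod 2 = 1}"
    by (auto simp: parity_class_def even_iff_mod_2_eq_zero odd_iff_mod_2_eq_one)
  note maximum = parity_class_maximum[where 'a='a and 'n='n]
  have max0: "max_code_size T 2 = card (parity_class 0 :: ('a^'n) set set)"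
    by (rule max_code_size_eqI[OF parity_class_is_code maximum(1)]) (use odd in auto)
  then show ?max_even by (simp only: classes card_parity_class)
  have "card (parity_class 0 :: ('a^'n) set set) = card (parity_class 1 :: ('a^'n) set set)"
    using maximum(1)[OF parity_class_is_code, of 0 1] maximum(1)[OF parity_class_is_code, of 1 0] odd
    by simp
  with max0 have max1: "max_code_size T 2 = card (parity_class 1 :: ('a^'n) set set)" by simp
  then show ?max_odd by (simp only: classes card_parity_class)
  have "{C :: ('a^'n) set set. is_code 2 C \<and> card C = max_code_size T 2} = {parity_class 0, parity_class 1}"
  proof (intro set_eqI iffI)
    fix C :: "('a^'n) set set" assume "C \<in> {C. is_code 2 C \<and> card C = max_code_size T 2}"
    then have "card C = card (parity_class 0 :: ('a^'n) set set)" "is_code 2 C" using max0 by simp_all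
    then obtain p where "p < 2" "C = parity_class p"
      using maximum(2)[OF \<open>is_code 2 C\<close>, of 0] odd by auto
    then show "C \<in> {parity_class 0, parity_class 1}" by (cases p) auto
  qed (use parity_class_is_code max0 max1 in auto)
  then show ?optimal by (simp only: classes)
  have "{0} \<in> parity_class 0" "{0} \<notin> (parity_class 1 :: ('a^'n) set set)"
    by (auto simp: parity_class_def subspaces_def)
  then show ?distinct unfolding classes by blast
  show ?isomorphic
    unfolding classes codes_isomorphic_def
    using dS_isometry_perp perp_image_parity_class_0[OF odd] by blast
qed

theorem mainTheorem13:
  fixes T :: "('a::{field,finite} ^ 'n) itself"
  defines "q \<equiv> CARD('a)" and "v \<equiv> CARD('n)"
  shows
   "(\<forall>k. v = 2 * k \<longrightarrow>
       max_code_size T 2 = (\<Sum>i\<in>{i. i \<le> v \<and> i mod 2 = k mod 2}. gauss_binom q v i) \<and>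
       (\<forall>C :: ('a ^ 'n) set set. is_code 2 C \<and> card C = max_code_size T 2 \<longleftrightarrow>
          C = {X \<in> subspaces. vec.dim X mod 2 = k mod 2}))
    \<and>
    (\<forall>k. v = 2 * k + 1 \<longrightarrow>
       max_code_size T 2 = (\<Sum>i\<in>{i. i \<le> v \<and> even i}. gauss_binom q v i) \<and>
       max_code_size T 2 = (\<Sum>i\<in>{i. i \<le> v \<and> odd i}. gauss_binom q v i) \<and>
       {C :: ('a ^ 'n) set set. is_code 2 C \<and> card C = max_code_size T 2} =
          {{X \<in> subspaces. even (vec.dim X)}, {X \<in> subspaces. odd (vec.dim X)}} \<and>
       {X \<in> subspaces. even (vec.dim X)} \<noteq> {X :: ('a ^ 'n) set \<in> subspaces. odd (vec.dim X)} \<and>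
       codes_isomorphic {X :: ('a ^ 'n) set \<in> subspaces. even (vec.dim X)}
                        {X \<in> subspaces. odd (vec.dim X)})"
  unfolding q_def v_def
  by (intro conjI allI impI; rule even_dimension_optimal_codes odd_dimension_optimal_codes; assumption)

end
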